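(* Let $H\in(\tfrac12,1)$, $\sigma>0$, $N>1$. (1) For all $1\le i<n\le N$, $J_n^{(N,H)}(i)=N^{-H}j_n^H(i)$. (2) For all $1\le n\le N$, $g_n^{(N,H)}=N^{-H}g_n^H$. In particular, for all $1\le n\le N$, $N^H X_n^{(N,H)}=n^H X_n^{(n,H)}$.
   Context: $c_H=\sqrt{\frac{2H\,\Gamma(\frac32-H)}{\Gamma(H+\frac12)\Gamma(2-2H)}}$, $C_H=c_H(H-\frac12)$, $k_H(t,s)=C_H s^{\frac12-H}\int_s^t u^{H-\frac12}(u-s)^{H-\frac32}du$. For $1\le i<n\le N$: $J_n^{(N,H)}(i)=\sigma\sqrt N\int_{(i-1)/N}^{i/N}(k_H(\frac nN,u)-k_H(\frac{n-1}N,u))du$; for $1\le n\le N$: $g_n^{(N,H)}=\sigma\sqrt N\int_{(n-1)/N}^{n/N}k_H(\frac nN,u)du$. Further $j_n^H(i)=\sigma C_H\int_{i-1}^i x^{\frac12-H}\Big(\int_0^1(v+n-1)^{H-\frac12}(v+n-1-x)^{H-\frac32}dv\Big)dx$ and $g_n^H=\sigma C_H\int_{n-1}^n x^{\frac12-H}(n-x)^{H-\frac12}\Big(\int_0^1(y(n-x)+x)^{H-\frac12}y^{H-\frac32}dy\Big)dx$. Let $(\xi_i)_{i\ge1}$ be i.i.d. with $P(\xi_i=\pm1)=\frac12$ and $X_n^{(N,H)}=\sum_{i=1}^{n-1}J_n^{(N,H)}(i)\xi_i+g_n^{(N,H)}\xi_n$ for $1\le n\le N$. *)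

theory Defs
  imports "HOL-Analysis.Analysis"
begin

definition cH :: "real \<Rightarrow> real" where
  "cH H = sqrt ((2 * H * Gamma (3/2 - H)) / (Gamma (H + 1/2) * Gamma (2 - 2*H)))"

definition CH :: "real \<Rightarrow> real" where
  "CH H = cH H * (H - 1/2)"

definition kH :: "real \<Rightarrow> real \<Rightarrow> real \<Rightarrow> real" where
  "kH H t s = CH H * s powr (1/2 - H) *
     integral {s..t} (\<lambda>u. u powr (H - 1/2) * (u - s) powr (H - 3/2))"

definition JN :: "nat \<Rightarrow> real \<Rightarrow> real \<Rightarrow> nat \<Rightarrow> nat \<Rightarrow> real" where
  "JN N H \<sigma> n i = \<sigma> * sqrt (real N) *
     integral {(real i - 1) / real N .. real i / real N}
       (\<lambda>u. kH H (real n / real N) u - kH H ((real n - 1) / real N) u)"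

definition gN :: "nat \<Rightarrow> real \<Rightarrow> real \<Rightarrow> nat \<Rightarrow> real" where
  "gN N H \<sigma> n = \<sigma> * sqrt (real N) *
     integral {(real n - 1) / real N .. real n / real N} (\<lambda>u. kH H (real n / real N) u)"

definition jH :: "real \<Rightarrow> real \<Rightarrow> nat \<Rightarrow> nat \<Rightarrow> real" where
  "jH H \<sigma> n i = \<sigma> * CH H *
     integral {real i - 1 .. real i} (\<lambda>x. x powr (1/2 - H) *
       integral {0..1} (\<lambda>v. (v + real n - 1) powr (H - 1/2) * (v + real n - 1 - x) powr (H - 3/2)))"

definition gH :: "real \<Rightarrow> real \<Rightarrow> nat \<Rightarrow> real" where
  "gH H \<sigma> n = \<sigma> * CH H *
     integral {real n - 1 .. real n} (\<lambda>x. x powr (1/2 - H) * (real n - x) powr (H - 1/2) *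
       integral {0..1} (\<lambda>y. (y * (real n - x) + x) powr (H - 1/2) * y powr (H - 3/2)))"

text \<open>The process value for a given realisation xi of the Rademacher sequence.\<close>
definition XN :: "nat \<Rightarrow> real \<Rightarrow> real \<Rightarrow> (nat \<Rightarrow> real) \<Rightarrow> nat \<Rightarrow> real" where
  "XN N H \<sigma> \<xi> n = (\<Sum>i=1..<n. JN N H \<sigma> n i * \<xi> i) + gN N H \<sigma> n * \<xi> n"

end

theory Submission
  imports Defs
begin

text \<open>The kernel is homogeneous: substituting \<open>u = c w\<close> gives
  \<open>k_H(c t, c s) = c^(H - 1/2) k_H(t, s)\<close>. Rescaling the outer integrals of \<open>J_n^(N,H)(i)\<close>
  and \<open>g_n^(N,H)\<close> by \<open>u = x/N\<close> therefore pulls out exactly \<open>N^(-H)\<close> and leaves the same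
  quantities at \<open>N = 1\<close>. These are \<open>j_n^H(i)\<close> and \<open>g_n^H\<close>: the inner integral over
  \<open>[n-1, n]\<close> is shifted to \<open>[0, 1]\<close>, resp. the one over \<open>[x, n]\<close> is mapped affinely onto
  \<open>[0, 1]\<close>. Hence \<open>N^H X_n^(N,H) = X_n^(1,H)\<close> for every \<open>N \<ge> 1\<close>, in particular for \<open>N = n\<close>.\<close>

lemma integral_real_affine:
  fixes f :: "real \<Rightarrow> real"
  assumes "c > 0"
  shows "integral {(p - d) / c .. (q - d) / c} (\<lambda>v. f (c * v + d)) = integral {p..q} f / c"
proof -
  have iff: "((\<lambda>v. f (c * v + d)) has_integral I / c) {(p - d) / c .. (q - d) / c}
             \<longleftrightarrow> (f has_integral I) {p..q}" for I
    using has_integral_affinity_iff[OF assms, of f d I p q] by (simp add: cbox_interval divide_inverse ac_simps)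
  show ?thesis
  proof (cases "f integrable_on {p..q}")
    case True
    then show ?thesis using iff by (blast intro: integral_unique)
  next
    case False
    have "\<not> (\<lambda>v. f (c * v + d)) integrable_on {(p - d) / c .. (q - d) / c}"
    proof
      assume "(\<lambda>v. f (c * v + d)) integrable_on {(p - d) / c .. (q - d) / c}"
      then obtain J where "((\<lambda>v. f (c * v + d)) has_integral (J * c) / c) {(p - d) / c .. (q - d) / c}"
        using assms by (auto simp: integrable_on_def)
      with iff False show False by blast
    qed
    with False show ?thesis by (simp add: not_integrable_integral)
  qed
qed

lemma integral_rescale_homogeneous:
  fixes f g :: "real \<Rightarrow> real" and N :: real
  assumes N: "N > 0" and hom: "\<And>x. x \<in> {a..b} \<Longrightarrow> f (x / N) = N powr p * g x"
  shows "integral {a / N .. b / N} f = N powr (p - 1) * integral {a..b} g"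
proof -
  have "integral {a / N .. b / N} f = integral {a..b} (\<lambda>x. f (x / N)) / N"
    using integral_real_affine[where c = "1 / N" and f = f and d = 0 and p = "a / N" and q = "b / N"] N
    by simp
  also have "integral {a..b} (\<lambda>x. f (x / N)) = N powr p * integral {a..b} g"
    unfolding integral_mult_right[symmetric] by (rule integral_cong) (rule hom)
  finally show ?thesis
    using N by (simp add: powr_diff)
qed

lemma sqrt_mult_powr:
  fixes N :: real
  assumes "N \<ge> 0"
  shows "sqrt N * N powr p = N powr (p + 1/2)"
  using assms by (simp add: powr_add powr_half_sqrt)

lemma kH_homogeneous:
  fixes c s t :: real
  assumes c: "c > 0" and s: "0 \<le> s"
  shows "kH H (c * t) (c * s) = c powr (H - 1/2) * kH H t s"
proof -
  define f where "f w = w powr (H - 1/2) * (w - c * s) powr (H - 3/2)" for w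
  define I where "I = integral {s..t} (\<lambda>w. w powr (H - 1/2) * (w - s) powr (H - 3/2))"
  have "f (c * w) = c powr (2 * H - 2) * (w powr (H - 1/2) * (w - s) powr (H - 3/2))"
    if "w \<in> {s..t}" for w
  proof -
    have "f (c * w) = (c powr (H - 1/2) * c powr (H - 3/2)) * (w powr (H - 1/2) * (w - s) powr (H - 3/2))"
      using that s c by (simp add: f_def powr_mult flip: right_diff_distrib)
    then show ?thesis by (simp flip: powr_add)
  qed
  then have "integral {s..t} (\<lambda>w. f (c * w)) = c powr (2 * H - 2) * I"
    unfolding I_def integral_mult_right[symmetric] by (rule integral_cong) simp
  moreover have "integral {c * s .. c * t} f = c * integral {s..t} (\<lambda>w. f (c * w))"
    using integral_real_affine[OF c, where f = f and d = 0 and p = "c * s" and q = "c * t"] c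
    by simp
  ultimately have "integral {c * s .. c * t} f = c * (c powr (2 * H - 2) * I)"
    by simp
  moreover have "(c * s) powr (1/2 - H) * (c * (c powr (2 * H - 2))) = c powr (H - 1/2) * s powr (1/2 - H)"
    using c s by (simp add: powr_mult powr_mult_base flip: powr_add)
  ultimately show ?thesis
    unfolding kH_def f_def I_def by (simp add: ac_simps)
qed

lemma kH_rescale:
  fixes N t x :: real
  assumes "N > 0" "0 \<le> x"
  shows "kH H (t / N) (x / N) = N powr (1/2 - H) * kH H t x"
proof -
  have "N powr (1/2 - H) = 1 / N powr (H - 1/2)"
    by (metis minus_diff_eq powr_minus_divide)
  then show ?thesis
    using kH_homogeneous[of "1 / N" x H t] assms by (simp add: powr_divide)
qed

lemma JN_rescale:
  assumes "N > 0" "1 \<le> i"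
  shows "JN N H \<sigma> n i = real N powr (-H) * JN 1 H \<sigma> n i"
proof -
  have "kH H (real n / N) (x / N) - kH H ((real n - 1) / N) (x / N)
      = N powr (1/2 - H) * (kH H n x - kH H (real n - 1) x)" if "x \<in> {real i - 1 .. real i}" for x
    using that assms kH_rescale[of N x H n] kH_rescale[of N x H "real n - 1"] by (simp add: right_diff_distrib)
  then have "integral {(real i - 1) / N .. real i / N}
      (\<lambda>u. kH H (real n / N) u - kH H ((real n - 1) / N) u)
    = N powr (1/2 - H - 1) * integral {real i - 1 .. real i} (\<lambda>x. kH H n x - kH H (real n - 1) x)"
    using assms by (intro integral_rescale_homogeneous) auto
  then show ?thesis
    by (simp add: JN_def sqrt_mult_powr)
qed

lemma gN_rescale:
  assumes "N > 0" "1 \<le> n"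
  shows "gN N H \<sigma> n = real N powr (-H) * gN 1 H \<sigma> n"
proof -
  have "kH H (real n / N) (x / N) = N powr (1/2 - H) * kH H n x" if "x \<in> {real n - 1 .. real n}" for x
    using that assms kH_rescale[of N x H n] by simp
  then have "integral {(real n - 1) / N .. real n / N} (\<lambda>u. kH H (real n / N) u)
    = N powr (1/2 - H - 1) * integral {real n - 1 .. real n} (\<lambda>x. kH H n x)"
    using assms by (intro integral_rescale_homogeneous) auto
  then show ?thesis
    by (simp add: gN_def sqrt_mult_powr)
qed

lemma integrable_on_powr_mult_powr_diff:
  fixes a b s t :: real
  assumes a: "a > 0" and b: "b > -1" and s: "0 \<le> s"
  shows "(\<lambda>w. w powr a * (w - s) powr b) integrable_on {s..t}"
proof -
  have "(\<lambda>z. z powr b) integrable_on {s - s..t - s}"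
    using integrable_on_powr_from_0[OF b, of "t - s"] by (cases "s \<le> t") auto
  then have "(\<lambda>w. (w - s) powr b) integrable_on {s..t}"
    using integrable_on_shift_Icc_real[of "\<lambda>z. z powr b" "-s" s t] by (simp add: o_def)
  then have diff: "(\<lambda>w. (w - s) powr b) absolutely_integrable_on {s..t}"
    by (rule nonnegative_absolutely_integrable_1) simp
  have cont: "continuous_on {s..t} (\<lambda>w. w powr a)"
    by (rule continuous_on_powr') (use a s in \<open>auto intro: continuous_intros\<close>)
  have "(\<lambda>w. w powr a * (w - s) powr b) absolutely_integrable_on {s..t}"
    by (rule absolutely_integrable_bounded_measurable_product_real[OF
          continuous_imp_measurable_on_sets_lebesgue[OF cont] _ _ diff])
       (auto intro: compact_imp_bounded compact_continuous_image[OF cont])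
  then show ?thesis
    using absolutely_integrable_on_def by blast
qed

lemma kH_diff_eq_unit_integral:
  fixes t x :: real
  assumes H: "1/2 < H" and x: "0 \<le> x" "x \<le> t - 1"
  shows "kH H t x - kH H (t - 1) x = CH H * x powr (1/2 - H) *
    integral {0..1} (\<lambda>v. (v + t - 1) powr (H - 1/2) * (v + t - 1 - x) powr (H - 3/2))"
proof -
  define f where "f w = w powr (H - 1/2) * (w - x) powr (H - 3/2)" for w
  have "f integrable_on {x..t}"
    unfolding f_def by (rule integrable_on_powr_mult_powr_diff) (use H x in auto)
  then have "integral {x..t} f = integral {x..t - 1} f + integral {t - 1..t} f"
    using Henstock_Kurzweil_Integration.integral_combine[OF x(2), of t f] by simp
  moreover have "integral {t - 1..t} f = integral {0..1} (\<lambda>v. f (v + t - 1))"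
    using integral_real_affine[where c = 1 and f = f and d = "t - 1" and p = "t - 1" and q = t]
    by (simp add: add_diff_eq)
  ultimately show ?thesis
    unfolding kH_def by (simp add: f_def[abs_def] algebra_simps)
qed

lemma kH_eq_unit_integral:
  fixes t x :: real
  assumes x: "0 \<le> x" "x \<le> t"
  shows "kH H t x = CH H * x powr (1/2 - H) * (t - x) powr (H - 1/2) *
    integral {0..1} (\<lambda>y. (y * (t - x) + x) powr (H - 1/2) * y powr (H - 3/2))"
proof (cases "x = t")
  case True
  then show ?thesis by (simp add: kH_def)
next
  case False
  define f where "f w = w powr (H - 1/2) * (w - x) powr (H - 3/2)" for w
  define L where "L = integral {0..1} (\<lambda>y. (y * (t - x) + x) powr (H - 1/2) * y powr (H - 3/2))"
  have d: "t - x > 0" using x False by simp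
  have "f ((t - x) * y + x) = (t - x) powr (H - 3/2) * ((y * (t - x) + x) powr (H - 1/2) * y powr (H - 3/2))"
    if "y \<in> {0..1}" for y
    using that d by (simp add: f_def powr_mult ac_simps)
  then have "integral {0..1} (\<lambda>y. f ((t - x) * y + x)) = (t - x) powr (H - 3/2) * L"
    unfolding L_def integral_mult_right[symmetric] by (rule integral_cong) simp
  moreover have "integral {x..t} f = (t - x) * integral {0..1} (\<lambda>y. f ((t - x) * y + x))"
    using integral_real_affine[OF d, where f = f and d = x and p = x and q = t] d by simp
  ultimately have "integral {x..t} f = ((t - x) * (t - x) powr (H - 3/2)) * L"
    by simp
  also have "(t - x) * (t - x) powr (H - 3/2) = (t - x) powr (H - 1/2)"
    using d by (simp add: powr_mult_base)
  finally show ?thesis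
    by (simp add: kH_def f_def[abs_def] L_def mult.assoc)
qed

lemma jH_eq_JN_1:
  assumes H: "1/2 < H" and i: "1 \<le> i" "i < n"
  shows "jH H \<sigma> n i = JN 1 H \<sigma> n i"
proof -
  have "kH H n x - kH H (real n - 1) x = CH H * (x powr (1/2 - H) *
      integral {0..1} (\<lambda>v. (v + real n - 1) powr (H - 1/2) * (v + real n - 1 - x) powr (H - 3/2)))"
    if "x \<in> {real i - 1 .. real i}" for x
    using that i kH_diff_eq_unit_integral[OF H, of x "real n"] by simp
  then have "integral {real i - 1 .. real i} (\<lambda>x. kH H n x - kH H (real n - 1) x) =
      CH H * integral {real i - 1 .. real i} (\<lambda>x. x powr (1/2 - H) *
        integral {0..1} (\<lambda>v. (v + real n - 1) powr (H - 1/2) * (v + real n - 1 - x) powr (H - 3/2)))"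
    unfolding integral_mult_right[symmetric] by (rule integral_cong)
  then show ?thesis
    by (simp add: jH_def JN_def)
qed

lemma gH_eq_gN_1:
  assumes "1 \<le> n"
  shows "gH H \<sigma> n = gN 1 H \<sigma> n"
proof -
  have "kH H n x = CH H * (x powr (1/2 - H) * (real n - x) powr (H - 1/2) *
      integral {0..1} (\<lambda>y. (y * (real n - x) + x) powr (H - 1/2) * y powr (H - 3/2)))"
    if "x \<in> {real n - 1 .. real n}" for x
    using that assms kH_eq_unit_integral[of x "real n" H] by (simp add: ac_simps)
  then have "integral {real n - 1 .. real n} (kH H n) =
      CH H * integral {real n - 1 .. real n} (\<lambda>x. x powr (1/2 - H) * (real n - x) powr (H - 1/2) *
        integral {0..1} (\<lambda>y. (y * (real n - x) + x) powr (H - 1/2) * y powr (H - 3/2)))"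
    unfolding integral_mult_right[symmetric] by (rule integral_cong)
  then show ?thesis
    by (simp add: gH_def gN_def)
qed

lemma XN_rescale:
  assumes "N > 0" "1 \<le> n"
  shows "real N powr H * XN N H \<sigma> \<xi> n = XN 1 H \<sigma> \<xi> n"
proof -
  have cancel: "real N powr H * (real N powr (-H) * y) = y" for y
    using assms by (simp add: powr_minus)
  have J: "real N powr H * JN N H \<sigma> n i = JN 1 H \<sigma> n i" if "i \<in> {1..<n}" for i
    using that assms by (simp add: JN_rescale[of N] cancel)
  have g: "real N powr H * gN N H \<sigma> n = gN 1 H \<sigma> n"
    using assms by (simp add: gN_rescale[of N] cancel)
  have "(\<Sum>i = 1..<n. real N powr H * JN N H \<sigma> n i * \<xi> i) = (\<Sum>i = 1..<n. JN 1 H \<sigma> n i * \<xi> i)"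
    by (rule sum.cong) (simp_all add: J)
  with g show ?thesis
    unfolding XN_def distrib_left sum_distrib_left mult.assoc[symmetric] by simp
qed

theorem proposition4p1:
  fixes H \<sigma> :: real and N :: nat
  assumes "1/2 < H" "H < 1" "\<sigma> > 0" "N > 1"
  shows "(\<forall>i n. 1 \<le> i \<and> i < n \<and> n \<le> N \<longrightarrow> JN N H \<sigma> n i = real N powr (-H) * jH H \<sigma> n i)
       \<and> (\<forall>n. 1 \<le> n \<and> n \<le> N \<longrightarrow> gN N H \<sigma> n = real N powr (-H) * gH H \<sigma> n)
       \<and> (\<forall>\<xi> :: nat \<Rightarrow> real. (\<forall>i. \<xi> i = 1 \<or> \<xi> i = -1) \<longrightarrow>
            (\<forall>n. 1 \<le> n \<and> n \<le> N \<longrightarrow>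
               real N powr H * XN N H \<sigma> \<xi> n = real n powr H * XN n H \<sigma> \<xi> n))"
proof -
  have N: "N > 0" using assms(4) by simp
  show ?thesis
  proof (intro conjI allI impI)
    fix i n assume "1 \<le> i \<and> i < n \<and> n \<le> N"
    then show "JN N H \<sigma> n i = real N powr (-H) * jH H \<sigma> n i"
      using JN_rescale[OF N] jH_eq_JN_1[OF assms(1)] by simp
  next
    fix n assume "1 \<le> n \<and> n \<le> N"
    then show "gN N H \<sigma> n = real N powr (-H) * gH H \<sigma> n"
      using gN_rescale[OF N] gH_eq_gN_1 by simp
  next
    fix \<xi> :: "nat \<Rightarrow> real" and n assume "1 \<le> n \<and> n \<le> N"
    then show "real N powr H * XN N H \<sigma> \<xi> n = real n powr H * XN n H \<sigma> \<xi> n"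
      using XN_rescale[OF N] XN_rescale[of n] by simp
  qed
qed

end
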